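(* Let $A_1\in\mathbb R^{n_1\times n_1}$, $A_2\in\mathbb R^{n_2\times n_2}$ be symmetric positive definite with spectra contained in $[\alpha_1,\beta_1]$ and $[\alpha_2,\beta_2]$ respectively ($0<\alpha_i\le\beta_i$), let $B\in\mathbb R^{n_1\times n_2}$, let $\epsilon>0$ and set $\kappa:=\frac{\beta_1+\beta_2}{\alpha_1+\alpha_2}$, assuming $\kappa\epsilon<1$. Let $A_i^{(h)}$, $h=0,\dots,\ell$, be the level-$h$ block-diagonal parts of $A_i$ (see context). Suppose matrices $\widetilde X^{(\ell)}$ and $\delta\widetilde X^{(h)}$, $h=\ell-1,\dots,0$, of size $n_1\times n_2$ are given, and define $$R^{(\ell)}:=A_1^{(\ell)}\widetilde X^{(\ell)}+\widetilde X^{(\ell)}A_2^{(\ell)}-B,$$ and, for $h=\ell-1,\dots,0$, with $\widetilde X^{(h+1)}:=\widetilde X^{(\ell)}+\delta\widetilde X^{(\ell-1)}+\dots+\delta\widetilde X^{(h+1)}$, $$\widetilde\Xi^{(h)}:=-(A_1^{(h)}-A_1^{(h+1)})\widetilde X^{(h+1)}-\widetilde X^{(h+1)}(A_2^{(h)}-A_2^{(h+1)}),\qquad R^{(h)}:=A_1^{(h)}\delta\widetilde X^{(h)}+\delta\widetilde X^{(h)}A_2^{(h)}-\widetilde\Xi^{(h)}.$$ Assume $\|R^{(\ell)}\|_F\le\epsilon\|B\|_F$ and $\|R^{(h)}\|_F\le\epsilon\|\widetilde\Xi^{(h)}\|_F$ for $h<\ell$. Then for every $h=0,\dots,\ell$,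 the matrix $\widetilde X^{(h)}:=\widetilde X^{(\ell)}+\delta\widetilde X^{(\ell-1)}+\dots+\delta\widetilde X^{(h)}$ satisfies $$A_1^{(h)}\widetilde X^{(h)}+\widetilde X^{(h)}A_2^{(h)}=B+R^{(\ell)}+\dots+R^{(h)},$$ and $$\|R^{(h)}\|_F\le\kappa\epsilon(1+\epsilon)(1+\kappa\epsilon)^{\ell-h-1}\|B\|_F.$$
   Context: For $i=1,2$, fix a sequence of nested partitions of $\{1,\dots,n_i\}$ into sets of contiguous indices at levels $h=0,1,\dots,\ell$: level $0$ is the trivial partition $\{1,\dots,n_i\}$, and each set at level $h+1$ is obtained by splitting a set of level $h$ into two contiguous parts (one of which may be empty). $A_i^{(h)}$ denotes the block-diagonal matrix obtained from $A_i$ by keeping the entries whose row and column indices lie in the same set of the level-$h$ partition and setting all other entries to zero; in particular $A_i^{(0)}=A_i$, and $A_i^{(h)}-A_i^{(h+1)}$ consists of the off-diagonal blocks uncovered at level $h+1$. $\|\cdot\|_F$ is the Frobenius norm. *)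

theory Defs
  imports "Jordan_Normal_Form.Char_Poly"
begin

definition frob_norm :: "real mat \<Rightarrow> real" where
  "frob_norm A = sqrt (\<Sum>i<dim_row A. \<Sum>j<dim_col A. (A $$ (i, j))\<^sup>2)"

definition sym_mat :: "real mat \<Rightarrow> bool" where
  "sym_mat A \<longleftrightarrow> A = transpose_mat A"

definition pos_def_mat :: "real mat \<Rightarrow> bool" where
  "pos_def_mat A \<longleftrightarrow> sym_mat A \<and>
     (\<forall>x \<in> carrier_vec (dim_row A). x \<noteq> 0\<^sub>v (dim_row A) \<longrightarrow> x \<bullet> (A *\<^sub>v x) > 0)"

definition spectrum_in :: "real mat \<Rightarrow> real \<Rightarrow> real \<Rightarrow> bool" where
  "spectrum_in A a b \<longleftrightarrow> (\<forall>mu. eigenvalue A mu \<longrightarrow> a \<le> mu \<and> mu \<le> b)"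

definition split_into :: "nat set \<Rightarrow> nat set \<Rightarrow> nat set \<Rightarrow> bool" where
  "split_into S S1 S2 \<longleftrightarrow> S1 \<union> S2 = S \<and> (\<forall>x\<in>S1. \<forall>y\<in>S2. x < y)"

text \<open>P h is the level-h partition of {0..<n} (0-based indices), for h = 0..l:
  level 0 is the trivial partition, each set at level h+1 arises by splitting a set
  at level h into two contiguous parts.\<close>
definition nested_partitions :: "nat \<Rightarrow> nat \<Rightarrow> (nat \<Rightarrow> nat set set) \<Rightarrow> bool" where
  "nested_partitions n l P \<longleftrightarrow> P 0 = {{0..<n}} \<and>
     (\<forall>h<l. \<exists>f :: nat set \<Rightarrow> nat set \<times> nat set.
        (\<forall>S\<in>P h. split_into S (fst (f S)) (snd (f S))) \<and>
        P (Suc h) = (\<Union>S\<in>P h. {fst (f S), snd (f S)}))"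

definition block_part :: "nat set set \<Rightarrow> real mat \<Rightarrow> real mat" where
  "block_part Q A = mat (dim_row A) (dim_col A)
     (\<lambda>(i, j). if \<exists>S\<in>Q. i \<in> S \<and> j \<in> S then A $$ (i, j) else 0)"

definition msum :: "nat \<Rightarrow> nat \<Rightarrow> (nat \<Rightarrow> real mat) \<Rightarrow> nat set \<Rightarrow> real mat" where
  "msum m n F K = mat m n (\<lambda>(i, j). \<Sum>k\<in>K. F k $$ (i, j))"

definition Xacc :: "nat \<Rightarrow> real mat \<Rightarrow> (nat \<Rightarrow> real mat) \<Rightarrow> nat \<Rightarrow> real mat" where
  "Xacc l Xl dX h = Xl + msum (dim_row Xl) (dim_col Xl) dX {h..<l}"

end

theory Submission
  imports Defs "HOL-Analysis.L2_Norm"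
begin

text \<open>
  Telescoping the level equations gives the residual identity: at level \<open>h\<close> the correction
  \<open>dX h\<close> absorbs the coupling \<open>Xi h\<close> up to the residual \<open>R h\<close>. For the bound, refining a
  partition replaces a block part \<open>M\<close> by the average of \<open>M\<close> and \<open>D M D\<close> for a diagonal sign
  matrix \<open>D\<close>. Hence the quadratic form of every block part of \<open>A\<^sub>i\<close> stays within
  \<open>[\<alpha>\<^sub>i, \<beta>\<^sub>i]\<close>, so the block-diagonal Sylvester operator of each level is bounded below by
  \<open>\<alpha>\<^sub>1 + \<alpha>\<^sub>2\<close>, while the off-diagonal part removed at each refinement has operator norm at
  most \<open>\<beta>\<^sub>i\<close>. Combined with the identity this gives
  \<open>\<parallel>Xi h\<parallel> \<le> \<kappa> (\<parallel>B\<parallel> + \<parallel>R (h + 1)\<parallel> + \<dots> + \<parallel>R l\<parallel>)\<close>, and the bound follows by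
  induction on \<open>l - h\<close>.
\<close>

section \<open>Quadratic forms and the spectrum\<close>

definition sqnorm :: "nat \<Rightarrow> (nat \<Rightarrow> real) \<Rightarrow> real" where
  "sqnorm n x = (\<Sum>i<n. (x i)\<^sup>2)"

definition bilin :: "real mat \<Rightarrow> (nat \<Rightarrow> real) \<Rightarrow> (nat \<Rightarrow> real) \<Rightarrow> real" where
  "bilin A x y = (\<Sum>i<dim_row A. \<Sum>j<dim_col A. x i * A $$ (i, j) * y j)"

definition mat_apply :: "real mat \<Rightarrow> (nat \<Rightarrow> real) \<Rightarrow> nat \<Rightarrow> real" where
  "mat_apply A x i = (\<Sum>j<dim_col A. A $$ (i, j) * x j)"

lemma sqnorm_nonneg: "0 \<le> sqnorm n x"
  unfolding sqnorm_def by (simp add: sum_nonneg)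

lemma sqnorm_coord_le: "i < n \<Longrightarrow> (x i)\<^sup>2 \<le> sqnorm n x"
  unfolding sqnorm_def by (rule member_le_sum) auto

lemma sqnorm_eq_0_iff: "sqnorm n x = 0 \<longleftrightarrow> (\<forall>i<n. x i = 0)"
  unfolding sqnorm_def by (auto simp: sum_nonneg_eq_0_iff)

lemma sqnorm_scale: "sqnorm n (\<lambda>i. t * x i) = t\<^sup>2 * sqnorm n x"
  unfolding sqnorm_def by (simp add: sum_distrib_left power_mult_distrib)

lemma sqnorm_add_scaled:
  "sqnorm n (\<lambda>i. y i + t * u i) = sqnorm n y + 2 * t * (\<Sum>i<n. u i * y i) + t\<^sup>2 * sqnorm n u"
  unfolding sqnorm_def power2_eq_square
  by (simp add: algebra_simps sum.distrib sum_distrib_left)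

lemma sqnorm_sign_flip:
  assumes "\<And>i. d i \<in> {-1, 1}"
  shows "sqnorm n (\<lambda>i. d i * x i) = sqnorm n x"
proof -
  have "(d i)\<^sup>2 = 1" for i using assms[of i] by auto
  then show ?thesis unfolding sqnorm_def by (simp add: power_mult_distrib)
qed

lemma bilin_add_scaled:
  "bilin A (\<lambda>i. y i + t * u i) (\<lambda>i. y i + t * u i)
     = bilin A y y + t * (bilin A u y + bilin A y u) + t\<^sup>2 * bilin A u u"
  unfolding bilin_def power2_eq_square
  by (simp add: algebra_simps sum.distrib sum_distrib_left)

lemma bilin_scale: "bilin A (\<lambda>i. t * x i) (\<lambda>i. t * x i) = t\<^sup>2 * bilin A x x"
  unfolding bilin_def power2_eq_square by (simp add: sum_distrib_left algebra_simps)

lemma bilin_eq_sum_mat_apply: "bilin A x y = (\<Sum>i<dim_row A. x i * mat_apply A y i)"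
  unfolding bilin_def mat_apply_def by (simp add: sum_distrib_left mult.assoc)

lemma bilin_uminus: "bilin (- A) x y = - bilin A x y"
  unfolding bilin_def by (simp add: sum_negf)

lemma mat_apply_uminus: "i < dim_row A \<Longrightarrow> mat_apply (- A) x i = - mat_apply A x i"
  unfolding mat_apply_def by (simp add: sum_negf)

lemma bilin_minus:
  "A \<in> carrier_mat n n \<Longrightarrow> B \<in> carrier_mat n n \<Longrightarrow> bilin (A - B) x y = bilin A x y - bilin B x y"
  unfolding bilin_def by (simp add: sum_subtractf algebra_simps)

lemma sym_mat_index:
  "sym_mat A \<Longrightarrow> A \<in> carrier_mat n n \<Longrightarrow> i < n \<Longrightarrow> j < n \<Longrightarrow> A $$ (i, j) = A $$ (j, i)"
  unfolding sym_mat_def by (metis carrier_matD index_transpose_mat(1))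

lemma bilin_commute:
  assumes "sym_mat A" "A \<in> carrier_mat n n"
  shows "bilin A x y = bilin A y x"
  unfolding bilin_def using assms
  by (subst sum.swap) (auto intro!: sum.cong simp: sym_mat_index[OF assms] mult.commute mult.left_commute)

lemma abs_bilin_le_of_coords:
  assumes A: "A \<in> carrier_mat n n" and x: "\<And>i. i < n \<Longrightarrow> \<bar>x i\<bar> \<le> 1"
  shows "\<bar>bilin A x x\<bar> \<le> (\<Sum>i<n. \<Sum>j<n. \<bar>A $$ (i, j)\<bar>)"
proof -
  have "\<bar>x i * A $$ (i, j) * x j\<bar> \<le> \<bar>A $$ (i, j)\<bar>" if "i < n" "j < n" for i j
  proof -
    have "\<bar>x i\<bar> * \<bar>x j\<bar> * \<bar>A $$ (i, j)\<bar> \<le> 1 * \<bar>A $$ (i, j)\<bar>"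
      using mult_mono[OF x x, of i j] that by (intro mult_right_mono) (auto simp: mult.commute)
    then show ?thesis by (simp add: abs_mult mult_ac)
  qed
  then have "(\<Sum>i<n. \<Sum>j<n. \<bar>x i * A $$ (i, j) * x j\<bar>) \<le> (\<Sum>i<n. \<Sum>j<n. \<bar>A $$ (i, j)\<bar>)"
    by (intro sum_mono) auto
  moreover have "\<bar>bilin A x x\<bar> \<le> (\<Sum>i<n. \<bar>\<Sum>j<n. x i * A $$ (i, j) * x j\<bar>)"
    using A unfolding bilin_def by (simp add: sum_abs)
  moreover have "\<dots> \<le> (\<Sum>i<n. \<Sum>j<n. \<bar>x i * A $$ (i, j) * x j\<bar>)"
    by (intro sum_mono sum_abs)
  ultimately show ?thesis by linarith
qed

lemma tendsto_bilin:
  assumes "A \<in> carrier_mat n n" "\<And>i. i < n \<Longrightarrow> (\<lambda>k. x k i) \<longlonglongrightarrow> y i"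
  shows "(\<lambda>k. bilin A (x k) (x k)) \<longlonglongrightarrow> bilin A y y"
  using assms unfolding bilin_def by (auto intro!: tendsto_intros)

lemma tendsto_sqnorm:
  assumes "\<And>i. i < n \<Longrightarrow> (\<lambda>k. x k i) \<longlonglongrightarrow> y i"
  shows "(\<lambda>k. sqnorm n (x k)) \<longlonglongrightarrow> sqnorm n y"
  using assms unfolding sqnorm_def by (auto intro!: tendsto_intros)

lemma convergent_subseq_coords:
  fixes x :: "nat \<Rightarrow> nat \<Rightarrow> real"
  assumes "\<And>i. Bseq (\<lambda>k. x k i)"
  shows "\<exists>r y. strict_mono r \<and> (\<forall>i<m. (\<lambda>k. x (r k) i) \<longlonglongrightarrow> y i)"
proof (induction m)
  case 0
  show ?case using strict_mono_id by blast
next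
  case (Suc m)
  then obtain r y where r: "strict_mono r" and y: "\<forall>i<m. (\<lambda>k. x (r k) i) \<longlonglongrightarrow> y i"
    by blast
  obtain f where f: "strict_mono f" and mono: "monoseq (\<lambda>k. x (r (f k)) m)"
    using seq_monosub[of "\<lambda>k. x (r k) m"] by blast
  obtain L where L: "(\<lambda>k. x (r (f k)) m) \<longlonglongrightarrow> L"
    using Bseq_monoseq_convergent[OF Bseq_subseq[OF assms] mono] convergent_def by blast
  have "(\<lambda>k. x (r (f k)) i) \<longlonglongrightarrow> (y(m := L)) i" if "i < Suc m" for i
  proof (cases "i = m")
    case False
    with that y have "(\<lambda>k. x (r k) i) \<longlonglongrightarrow> y i" by simp
    from LIMSEQ_subseq_LIMSEQ[OF this f] False show ?thesis by (simp add: comp_def)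
  qed (use L in simp)
  moreover have "strict_mono (r \<circ> f)" using r f by (rule strict_mono_o)
  ultimately show ?case unfolding comp_def by blast
qed

lemma quadform_ge_of_sphere:
  assumes A: "A \<in> carrier_mat n n" and m: "\<And>x. sqnorm n x = 1 \<Longrightarrow> m \<le> bilin A x x"
  shows "m * sqnorm n x \<le> bilin A x x"
proof (cases "sqnorm n x = 0")
  case True
  then have "bilin A x x = 0" using A by (simp add: bilin_def sqnorm_eq_0_iff)
  with True show ?thesis by simp
next
  case False
  then have pos: "0 < sqnorm n x" using sqnorm_nonneg[of n x] by linarith
  define c where "c = 1 / sqrt (sqnorm n x)"
  have c2: "c\<^sup>2 * sqnorm n x = 1" using pos by (simp add: c_def power_divide)
  have "m \<le> c\<^sup>2 * bilin A x x"
    using m[of "\<lambda>i. c * x i"] by (simp add: sqnorm_scale bilin_scale c2)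
  then have "m * sqnorm n x \<le> c\<^sup>2 * sqnorm n x * bilin A x x"
    using pos by (simp add: algebra_simps)
  then show ?thesis by (simp add: c2)
qed

lemma quadform_attains_min_on_sphere:
  assumes A: "A \<in> carrier_mat n n" and n: "0 < n"
  shows "\<exists>y. sqnorm n y = 1 \<and> (\<forall>x. bilin A y y * sqnorm n x \<le> bilin A x x)"
proof -
  define V where "V = (\<lambda>x. bilin A x x) ` {x. sqnorm n x = 1}"
  define m where "m = Inf V"
  have coord_le_1: "\<bar>x i\<bar> \<le> 1" if "sqnorm n x = 1" "i < n" for x i
    using sqnorm_coord_le[OF that(2), of x] that(1) by (simp add: abs_square_le_1)
  have "sqnorm n (\<lambda>i. if i = 0 then 1 else 0) = (\<Sum>i<n. if i = 0 then 1 else 0)"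
    unfolding sqnorm_def by (rule sum.cong) auto
  then have V_ne: "V \<noteq> {}" using n unfolding V_def by force
  have "bdd_below V"
  proof (rule bdd_belowI)
    fix v assume "v \<in> V"
    then obtain x where "sqnorm n x = 1" "v = bilin A x x" unfolding V_def by blast
    then show "- (\<Sum>i<n. \<Sum>j<n. \<bar>A $$ (i, j)\<bar>) \<le> v"
      using abs_bilin_le_of_coords[OF A, of x] coord_le_1 by fastforce
  qed
  then have m_le: "m \<le> bilin A x x" if "sqnorm n x = 1" for x
    unfolding m_def V_def using that by (intro cInf_lower) auto
  have "\<exists>x. sqnorm n x = 1 \<and> bilin A x x < m + 1 / Suc k" for k
    using cInf_lessD[OF V_ne, of "m + 1 / Suc k"] unfolding m_def V_def by auto
  then obtain xs where xs: "\<And>k. sqnorm n (xs k) = 1"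
    and xs_lt: "\<And>k. bilin A (xs k) (xs k) < m + 1 / Suc k"
    by metis
  \<comment> \<open>Only the first \<open>n\<close> coordinates matter; truncating makes every coordinate bounded.\<close>
  have "Bseq (\<lambda>k. if i < n then xs k i else 0)" for i
    using coord_le_1[OF xs] by (intro BseqI'[of _ 1]) simp
  then obtain r y where r: "strict_mono r"
    and "\<forall>i<n. (\<lambda>k. if i < n then xs (r k) i else 0) \<longlonglongrightarrow> y i"
    using convergent_subseq_coords[of "\<lambda>k i. if i < n then xs k i else 0" n] by blast
  then have y: "(\<lambda>k. xs (r k) i) \<longlonglongrightarrow> y i" if "i < n" for i
    using that by simp
  have unit: "sqnorm n y = 1"
    using LIMSEQ_unique[OF tendsto_sqnorm[OF y]] xs by simp
  have "bilin A y y \<le> m"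
  proof (rule LIMSEQ_le)
    show "(\<lambda>k. bilin A (xs (r k)) (xs (r k))) \<longlonglongrightarrow> bilin A y y" by (rule tendsto_bilin[OF A y])
    have "(\<lambda>k. m + 1 / Suc k) \<longlonglongrightarrow> m"
      using tendsto_add[OF tendsto_const LIMSEQ_Suc[OF lim_const_over_n[of 1]]] by simp
    from LIMSEQ_subseq_LIMSEQ[OF this r] show "(\<lambda>k. m + 1 / Suc (r k)) \<longlonglongrightarrow> m"
      by (simp add: comp_def)
    show "\<exists>N. \<forall>k\<ge>N. bilin A (xs (r k)) (xs (r k)) \<le> m + 1 / Suc (r k)"
      using xs_lt less_imp_le by blast
  qed
  with m_le[OF unit] have "bilin A y y = m" by simp
  then show ?thesis using unit quadform_ge_of_sphere[OF A m_le] by auto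
qed

lemma quadform_minimizer_eigenvector:
  assumes A: "A \<in> carrier_mat n n" "sym_mat A"
    and min: "\<And>x. \<mu> * sqnorm n x \<le> bilin A x x"
    and y: "bilin A y y = \<mu> * sqnorm n y"
    and i: "i < n"
  shows "mat_apply A y i = \<mu> * y i"
proof -
  define w where "w i = mat_apply A y i - \<mu> * y i" for i
  define g where "g x = bilin A x x - \<mu> * sqnorm n x" for x
  have g_nonneg: "0 \<le> g x" for x using min[of x] by (simp add: g_def)
  have "bilin A w y - \<mu> * (\<Sum>i<n. w i * y i) = sqnorm n w"
    using A(1) unfolding bilin_eq_sum_mat_apply sqnorm_def w_def power2_eq_square
    by (simp add: sum_subtractf[symmetric] sum_distrib_left algebra_simps)
  then have g_line: "g (\<lambda>i. y i + t * w i) = 2 * t * sqnorm n w + t\<^sup>2 * g w" for t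
    unfolding g_def bilin_add_scaled sqnorm_add_scaled bilin_commute[OF A(2,1), of y w]
    using y by (simp add: algebra_simps)
  have "sqnorm n w = 0"
  proof (rule ccontr)
    assume "sqnorm n w \<noteq> 0"
    then have w_pos: "0 < sqnorm n w" using sqnorm_nonneg[of n w] by linarith
    define s where "s = sqnorm n w / (g w + 1)"
    have s_pos: "0 < s" using w_pos g_nonneg[of w] by (simp add: s_def)
    have "s * g w \<le> sqnorm n w" using w_pos g_nonneg[of w] by (simp add: s_def field_simps)
    moreover have "0 \<le> s * (s * g w - 2 * sqnorm n w)"
      using g_nonneg[of "\<lambda>i. y i + (- s) * w i"] unfolding g_line
      by (simp add: power2_eq_square algebra_simps)
    then have "0 \<le> s * g w - 2 * sqnorm n w" using s_pos by (simp add: zero_le_mult_iff)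
    ultimately show False using w_pos by linarith
  qed
  then show ?thesis using i by (simp add: sqnorm_eq_0_iff w_def)
qed

lemma eigenvalueI_mat_apply:
  assumes A: "A \<in> carrier_mat n n" and y: "sqnorm n y \<noteq> 0"
    and eigen: "\<And>i. i < n \<Longrightarrow> mat_apply A y i = \<mu> * y i"
  shows "eigenvalue A \<mu>"
proof -
  have "vec n y \<noteq> 0\<^sub>v n"
    using y by (metis index_vec index_zero_vec(1) sqnorm_eq_0_iff)
  moreover have "A *\<^sub>v vec n y = \<mu> \<cdot>\<^sub>v vec n y"
    using A eigen by (intro eq_vecI) (auto simp: mat_apply_def scalar_prod_def lessThan_atLeast0)
  ultimately show ?thesis
    using A unfolding eigenvalue_def eigenvector_def by (intro exI[of _ "vec n y"]) simp
qed

lemma exists_min_eigenpair: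
  assumes A: "A \<in> carrier_mat n n" "sym_mat A" and n: "0 < n"
  shows "\<exists>\<mu> y. sqnorm n y = 1 \<and> (\<forall>i<n. mat_apply A y i = \<mu> * y i)
    \<and> (\<forall>x. \<mu> * sqnorm n x \<le> bilin A x x)"
proof -
  obtain y where y: "sqnorm n y = 1" and min: "\<And>x. bilin A y y * sqnorm n x \<le> bilin A x x"
    using quadform_attains_min_on_sphere[OF A(1) n] by blast
  have "mat_apply A y i = bilin A y y * y i" if "i < n" for i
    using quadform_minimizer_eigenvector[OF A min _ that] y by simp
  with y min show ?thesis by blast
qed

lemma quadform_bounds_of_spectrum:
  assumes A: "A \<in> carrier_mat n n" "sym_mat A" and sp: "spectrum_in A \<alpha> \<beta>"
  shows "\<alpha> * sqnorm n x \<le> bilin A x x \<and> bilin A x x \<le> \<beta> * sqnorm n x"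
proof (cases "n = 0")
  case True
  then show ?thesis using A by (simp add: sqnorm_def bilin_def)
next
  case False
  then have n: "0 < n" by simp
  have x_nonneg: "0 \<le> sqnorm n x" by (rule sqnorm_nonneg)
  obtain \<mu> y where y: "sqnorm n y = 1" and eigen: "\<And>i. i < n \<Longrightarrow> mat_apply A y i = \<mu> * y i"
    and min: "\<And>x. \<mu> * sqnorm n x \<le> bilin A x x"
    using exists_min_eigenpair[OF A n] by blast
  have "eigenvalue A \<mu>" using eigenvalueI_mat_apply[OF A(1) _ eigen] y by simp
  then have "\<alpha> \<le> \<mu>" using sp by (simp add: spectrum_in_def)
  have lower: "\<alpha> * sqnorm n x \<le> bilin A x x"
    using mult_right_mono[OF \<open>\<alpha> \<le> \<mu>\<close> x_nonneg] min[of x] by linarith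
  have "transpose_mat (- A) = - A"
    using A(2) unfolding sym_mat_def transpose_uminus by (rule arg_cong[OF sym])
  then have negA: "- A \<in> carrier_mat n n" "sym_mat (- A)"
    using A(1) by (auto simp: sym_mat_def)
  obtain \<nu> z where z: "sqnorm n z = 1" and eigen': "\<And>i. i < n \<Longrightarrow> mat_apply (- A) z i = \<nu> * z i"
    and min': "\<And>x. \<nu> * sqnorm n x \<le> bilin (- A) x x"
    using exists_min_eigenpair[OF negA n] by blast
  have eigen_A: "mat_apply A z i = - \<nu> * z i" if "i < n" for i
    using eigen'[OF that] mat_apply_uminus[of i A z] A(1) that by simp
  have "eigenvalue A (- \<nu>)" using eigenvalueI_mat_apply[OF A(1) _ eigen_A] z by simp
  then have "- \<nu> \<le> \<beta>" using sp by (simp add: spectrum_in_def)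
  have upper: "bilin A x x \<le> \<beta> * sqnorm n x"
    using mult_right_mono[OF \<open>- \<nu> \<le> \<beta>\<close> x_nonneg] min'[of x] by (simp add: bilin_uminus)
  from lower upper show ?thesis ..
qed

section \<open>Block-diagonal parts along nested partitions\<close>

lemma nested_partitions_step:
  assumes "nested_partitions n l P" "h < l"
  obtains f where "\<And>S. S \<in> P h \<Longrightarrow> split_into S (fst (f S)) (snd (f S))"
    "P (Suc h) = (\<Union>S\<in>P h. {fst (f S), snd (f S)})"
proof -
  have "\<exists>f :: nat set \<Rightarrow> nat set \<times> nat set. (\<forall>S\<in>P h. split_into S (fst (f S)) (snd (f S)))
      \<and> P (Suc h) = (\<Union>S\<in>P h. {fst (f S), snd (f S)})"
    using assms unfolding nested_partitions_def by simp
  then obtain f where "\<forall>S\<in>P h. split_into S (fst (f S)) (snd (f S))"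
    "P (Suc h) = (\<Union>S\<in>P h. {fst (f S), snd (f S)})"
    by blast
  then show thesis by (intro that[of f]) auto
qed

lemma split_into_disjoint: "split_into S S1 S2 \<Longrightarrow> S1 \<inter> S2 = {}"
  unfolding split_into_def by fastforce

lemma nested_partitions_disjoint:
  assumes P: "nested_partitions n l P"
  shows "h \<le> l \<Longrightarrow> S \<in> P h \<Longrightarrow> T \<in> P h \<Longrightarrow> S \<noteq> T \<Longrightarrow> S \<inter> T = {}"
proof (induction h arbitrary: S T)
  case 0
  then show ?case using P by (simp add: nested_partitions_def)
next
  case (Suc h)
  have h: "h < l" using Suc.prems(1) by simp
  obtain f where f: "\<And>S. S \<in> P h \<Longrightarrow> split_into S (fst (f S)) (snd (f S))"
    and P_Suc: "P (Suc h) = (\<Union>S\<in>P h. {fst (f S), snd (f S)})"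
    by (rule nested_partitions_step[OF P h]) (rule that)
  obtain S' T' where S': "S' \<in> P h" "S = fst (f S') \<or> S = snd (f S')"
    and T': "T' \<in> P h" "T = fst (f T') \<or> T = snd (f T')"
    using Suc.prems(2,3) P_Suc by auto
  have "S \<subseteq> S'" "T \<subseteq> T'" using f[OF S'(1)] f[OF T'(1)] S'(2) T'(2)
    unfolding split_into_def by auto
  moreover have "S' \<noteq> T' \<Longrightarrow> S' \<inter> T' = {}" using Suc S'(1) T'(1) by simp
  moreover have "S' = T' \<Longrightarrow> S \<inter> T = {}"
    using split_into_disjoint[OF f[OF S'(1)]] S'(2) T'(2) Suc.prems(4) by auto
  ultimately show ?case by blast
qed

lemma nested_partitions_refine_sign:
  assumes P: "nested_partitions n l P" and h: "h < l"
  obtains d :: "nat \<Rightarrow> real" where "\<And>i. d i \<in> {-1, 1}"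
    "\<And>i j. (\<exists>S\<in>P (Suc h). i \<in> S \<and> j \<in> S) \<longleftrightarrow> (\<exists>S\<in>P h. i \<in> S \<and> j \<in> S) \<and> d i = d j"
proof -
  obtain f where f: "\<And>S. S \<in> P h \<Longrightarrow> split_into S (fst (f S)) (snd (f S))"
    and P_Suc: "P (Suc h) = (\<Union>S\<in>P h. {fst (f S), snd (f S)})"
    by (rule nested_partitions_step[OF P h]) (rule that)
  define F where "F = (\<Union>S\<in>P h. fst (f S))"
  have parts: "S = fst (f S) \<union> snd (f S)" "fst (f S) \<inter> snd (f S) = {}" if "S \<in> P h" for S
    using f[OF that] split_into_disjoint[OF f[OF that]] unfolding split_into_def by auto
  have F_iff: "i \<in> F \<longleftrightarrow> i \<in> fst (f S)" if S: "S \<in> P h" "i \<in> S" for i S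
  proof
    assume "i \<in> F"
    then obtain S' where S': "S' \<in> P h" "i \<in> fst (f S')" unfolding F_def by blast
    then have "S' \<inter> S \<noteq> {}" using parts(1)[OF S'(1)] S(2) by blast
    then have "S' = S" using nested_partitions_disjoint[OF P _ S'(1) S(1)] h by auto
    with S' show "i \<in> fst (f S)" by simp
  qed (use S(1) in \<open>auto simp: F_def\<close>)
  have "(\<exists>U\<in>P (Suc h). i \<in> U \<and> j \<in> U) \<longleftrightarrow> (\<exists>S\<in>P h. i \<in> S \<and> j \<in> S) \<and> (i \<in> F \<longleftrightarrow> j \<in> F)"
    for i j
  proof
    assume "\<exists>U\<in>P (Suc h). i \<in> U \<and> j \<in> U"
    then obtain S where S: "S \<in> P h"
      and ij: "i \<in> fst (f S) \<and> j \<in> fst (f S) \<or> i \<in> snd (f S) \<and> j \<in> snd (f S)"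
      unfolding P_Suc by blast
    have "i \<in> S" "j \<in> S" using ij parts(1)[OF S] by auto
    moreover have "i \<in> F \<longleftrightarrow> j \<in> F"
      using ij parts(2)[OF S] F_iff[OF S \<open>i \<in> S\<close>] F_iff[OF S \<open>j \<in> S\<close>] by auto
    ultimately show "(\<exists>S\<in>P h. i \<in> S \<and> j \<in> S) \<and> (i \<in> F \<longleftrightarrow> j \<in> F)" using S by blast
  next
    assume "(\<exists>S\<in>P h. i \<in> S \<and> j \<in> S) \<and> (i \<in> F \<longleftrightarrow> j \<in> F)"
    then obtain S where S: "S \<in> P h" "i \<in> S" "j \<in> S" and F: "i \<in> F \<longleftrightarrow> j \<in> F" by blast
    have "i \<in> fst (f S) \<and> j \<in> fst (f S) \<or> i \<in> snd (f S) \<and> j \<in> snd (f S)"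
      using parts(1)[OF S(1)] S(2,3) F F_iff[OF S(1,2)] F_iff[OF S(1,3)] by auto
    then show "\<exists>U\<in>P (Suc h). i \<in> U \<and> j \<in> U" unfolding P_Suc using S(1) by blast
  qed
  then show thesis by (intro that[of "\<lambda>i. if i \<in> F then 1 else -1"]) auto
qed

lemma dim_block_part [simp]:
  "dim_row (block_part Q A) = dim_row A" "dim_col (block_part Q A) = dim_col A"
  unfolding block_part_def by simp_all

lemma block_part_carrier: "A \<in> carrier_mat n n \<Longrightarrow> block_part Q A \<in> carrier_mat n n"
  unfolding block_part_def by simp

lemma block_part_index:
  "A \<in> carrier_mat n n \<Longrightarrow> i < n \<Longrightarrow> j < n \<Longrightarrow>
     block_part Q A $$ (i, j) = (if \<exists>S\<in>Q. i \<in> S \<and> j \<in> S then A $$ (i, j) else 0)"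
  unfolding block_part_def by simp

lemma sym_mat_block_part: "sym_mat A \<Longrightarrow> A \<in> carrier_mat n n \<Longrightarrow> sym_mat (block_part Q A)"
  unfolding sym_mat_def block_part_def
  by (rule eq_matI) (auto simp: sym_mat_index[unfolded sym_mat_def])

lemma bilin_block_part_refine:
  assumes A: "A \<in> carrier_mat n n" and d: "\<And>i. d i \<in> {-1, 1}"
    and refine: "\<And>i j. (\<exists>S\<in>Q'. i \<in> S \<and> j \<in> S) \<longleftrightarrow> (\<exists>S\<in>Q. i \<in> S \<and> j \<in> S) \<and> d i = d j"
  shows "bilin (block_part Q' A) x y
    = (bilin (block_part Q A) x y + bilin (block_part Q A) (\<lambda>i. d i * x i) (\<lambda>i. d i * y i)) / 2"
proof -
  have entry: "block_part Q' A $$ (i, j)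
      = (block_part Q A $$ (i, j) + d i * d j * block_part Q A $$ (i, j)) / 2"
    if "i < n" "j < n" for i j
    using d[of i] d[of j] refine[of i j] block_part_index[OF A that] by auto
  have "bilin (block_part Q' A) x y = (\<Sum>i<n. \<Sum>j<n. (x i * block_part Q A $$ (i, j) * y j
      + (d i * x i) * block_part Q A $$ (i, j) * (d j * y j)) / 2)"
    unfolding bilin_def using A by (intro sum.cong refl) (auto simp: entry algebra_simps)
  then show ?thesis
    using A by (simp add: bilin_def sum.distrib sum_divide_distrib[symmetric])
qed

lemma sym_mat_minus:
  assumes "A \<in> carrier_mat n n" "B \<in> carrier_mat n n" "sym_mat A" "sym_mat B"
  shows "sym_mat (A - B)"
proof -
  have "transpose_mat (A - B) = transpose_mat A - transpose_mat B"
    by (rule transpose_minus[OF assms(1,2)])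
  also have "\<dots> = A - B"
    by (simp only: assms(3,4)[unfolded sym_mat_def, symmetric])
  finally show ?thesis unfolding sym_mat_def by (rule sym)
qed

lemma quadform_bounds_block_part:
  assumes P: "nested_partitions n l P" and A: "A \<in> carrier_mat n n"
    and bounds: "\<And>x. \<alpha> * sqnorm n x \<le> bilin A x x \<and> bilin A x x \<le> \<beta> * sqnorm n x"
  shows "h \<le> l \<Longrightarrow>
    \<alpha> * sqnorm n x \<le> bilin (block_part (P h) A) x x \<and> bilin (block_part (P h) A) x x \<le> \<beta> * sqnorm n x"
proof (induction h arbitrary: x)
  case 0
  have "P 0 = {{0..<n}}" using P by (simp add: nested_partitions_def)
  then have "block_part (P 0) A = A"
    using A unfolding block_part_def by (intro eq_matI) auto
  then show ?case using bounds by simp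
next
  case (Suc h)
  have h: "h < l" using Suc.prems by simp
  obtain d :: "nat \<Rightarrow> real" where d: "\<And>i. d i \<in> {-1, 1}"
    and refine: "\<And>i j. (\<exists>S\<in>P (Suc h). i \<in> S \<and> j \<in> S) \<longleftrightarrow> (\<exists>S\<in>P h. i \<in> S \<and> j \<in> S) \<and> d i = d j"
    by (rule nested_partitions_refine_sign[OF P h]) (rule that)
  show ?case
    using Suc.IH[of x] Suc.IH[of "\<lambda>i. d i * x i"] h sqnorm_sign_flip[OF d, where n = n and x = x]
    unfolding bilin_block_part_refine[OF A d refine] by simp
qed

lemma sqnorm_mat_apply_le:
  assumes A: "A \<in> carrier_mat n n" "sym_mat A" and c: "0 < c"
    and form: "\<And>x. \<bar>bilin A x x\<bar> \<le> c * sqnorm n x"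
  shows "sqnorm n (mat_apply A z) \<le> c\<^sup>2 * sqnorm n z"
proof -
  have polar: "4 * bilin A w z \<le> 2 * c * (sqnorm n w + sqnorm n z)" for w
  proof -
    have "4 * bilin A w z = bilin A (\<lambda>i. w i + 1 * z i) (\<lambda>i. w i + 1 * z i)
        - bilin A (\<lambda>i. w i + (-1) * z i) (\<lambda>i. w i + (-1) * z i)"
      unfolding bilin_add_scaled bilin_commute[OF A(2,1), of z w] by simp
    also have "\<dots> \<le> c * sqnorm n (\<lambda>i. w i + 1 * z i) + c * sqnorm n (\<lambda>i. w i + (-1) * z i)"
      using form[of "\<lambda>i. w i + 1 * z i"] form[of "\<lambda>i. w i + (-1) * z i"] by linarith
    also have "\<dots> = 2 * c * (sqnorm n w + sqnorm n z)"
      unfolding sqnorm_add_scaled by (simp add: algebra_simps)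
    finally show ?thesis .
  qed
  \<comment> \<open>Polarization at \<open>w = A z / c\<close>.\<close>
  define v where "v = mat_apply A z"
  define w where "w i = v i / c" for i
  have "bilin A w z = sqnorm n v / c"
    using A(1) unfolding bilin_eq_sum_mat_apply sqnorm_def w_def v_def power2_eq_square
    by (simp add: sum_divide_distrib)
  moreover have "sqnorm n w = sqnorm n v / c\<^sup>2"
    unfolding sqnorm_def w_def by (simp add: power_divide sum_divide_distrib)
  ultimately have "4 * (sqnorm n v / c) \<le> 2 * c * (sqnorm n v / c\<^sup>2 + sqnorm n z)"
    using polar[of w] by simp
  then have "2 * sqnorm n v \<le> sqnorm n v + c\<^sup>2 * sqnorm n z"
    using c by (simp add: field_simps power2_eq_square)
  then show ?thesis by (simp add: v_def)
qed

lemma sqnorm_level_difference_le: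
  assumes P: "nested_partitions n l P" and h: "h < l"
    and A: "A \<in> carrier_mat n n" "sym_mat A"
    and bounds: "\<And>x. \<alpha> * sqnorm n x \<le> bilin A x x \<and> bilin A x x \<le> \<beta> * sqnorm n x"
    and \<alpha>\<beta>: "0 < \<alpha>" "\<alpha> \<le> \<beta>"
  shows "sqnorm n (mat_apply (block_part (P h) A - block_part (P (Suc h)) A) z) \<le> \<beta>\<^sup>2 * sqnorm n z"
proof (rule sqnorm_mat_apply_le)
  obtain d :: "nat \<Rightarrow> real" where d: "\<And>i. d i \<in> {-1, 1}"
    and refine: "\<And>i j. (\<exists>S\<in>P (Suc h). i \<in> S \<and> j \<in> S) \<longleftrightarrow> (\<exists>S\<in>P h. i \<in> S \<and> j \<in> S) \<and> d i = d j"
    by (rule nested_partitions_refine_sign[OF P h]) (rule that)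
  have M: "block_part (P h) A \<in> carrier_mat n n" "block_part (P (Suc h)) A \<in> carrier_mat n n"
    using A(1) by (auto intro: block_part_carrier)
  show "block_part (P h) A - block_part (P (Suc h)) A \<in> carrier_mat n n"
    by (rule minus_carrier_mat[OF M(2)])
  show "sym_mat (block_part (P h) A - block_part (P (Suc h)) A)"
    using sym_mat_minus[OF M sym_mat_block_part[OF A(2,1)] sym_mat_block_part[OF A(2,1)]] .
  show "0 < \<beta>" using \<alpha>\<beta> by simp
  fix x
  define p where "p = bilin (block_part (P h) A) x x"
  define q where "q = bilin (block_part (P h) A) (\<lambda>i. d i * x i) (\<lambda>i. d i * x i)"
  have diff: "bilin (block_part (P h) A - block_part (P (Suc h)) A) x x = (p - q) / 2"
    unfolding bilin_minus[OF M] bilin_block_part_refine[OF A(1) d refine] p_def q_def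
    by (simp add: field_simps)
  have level_bounds: "\<alpha> * sqnorm n y \<le> bilin (block_part (P h) A) y y
      \<and> bilin (block_part (P h) A) y y \<le> \<beta> * sqnorm n y" for y
    using quadform_bounds_block_part[OF P A(1) bounds] h by simp
  have "\<alpha> * sqnorm n x \<le> p" "p \<le> \<beta> * sqnorm n x" "\<alpha> * sqnorm n x \<le> q" "q \<le> \<beta> * sqnorm n x"
    unfolding p_def q_def using level_bounds[of x] level_bounds[of "\<lambda>i. d i * x i"]
    by (simp_all add: sqnorm_sign_flip[OF d])
  moreover have "0 \<le> \<alpha> * sqnorm n x" "\<alpha> * sqnorm n x \<le> \<beta> * sqnorm n x"
    using \<alpha>\<beta> sqnorm_nonneg[of n x] by (simp_all add: mult_right_mono)
  ultimately have "\<bar>p - q\<bar> \<le> 2 * (\<beta> * sqnorm n x)"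
    unfolding abs_le_iff by linarith
  then show "\<bar>bilin (block_part (P h) A - block_part (P (Suc h)) A) x x\<bar> \<le> \<beta> * sqnorm n x"
    unfolding diff by simp
qed

section \<open>Frobenius norm\<close>

lemma frob_norm_L2_set:
  "M \<in> carrier_mat n m \<Longrightarrow> frob_norm M = L2_set (index_mat M) ({..<n} \<times> {..<m})"
  unfolding frob_norm_def L2_set_def by (simp add: sum.cartesian_product case_prod_beta)

lemma frob_norm_nonneg: "0 \<le> frob_norm M"
  unfolding frob_norm_def by (simp add: sum_nonneg)

lemma frob_norm_add_le:
  assumes "A \<in> carrier_mat n m" "B \<in> carrier_mat n m"
  shows "frob_norm (A + B) \<le> frob_norm A + frob_norm B"
proof -
  have "frob_norm (A + B) = L2_set (index_mat (A + B)) ({..<n} \<times> {..<m})"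
    by (rule frob_norm_L2_set[OF add_carrier_mat[OF assms(2)]])
  also have "\<dots> = L2_set (\<lambda>p. A $$ p + B $$ p) ({..<n} \<times> {..<m})"
    using assms by (intro L2_set_cong) auto
  also have "\<dots> \<le> frob_norm A + frob_norm B"
    using assms by (simp add: frob_norm_L2_set L2_set_triangle_ineq)
  finally show ?thesis .
qed

lemma frob_norm_uminus: "frob_norm (- A) = frob_norm A"
  unfolding frob_norm_def by (auto intro!: arg_cong[where f = sqrt] sum.cong)

lemma frob_norm_transpose: "frob_norm (transpose_mat A) = frob_norm A"
  unfolding frob_norm_def by (subst sum.swap) (auto intro!: arg_cong[where f = sqrt] sum.cong)

lemma dim_msum [simp]: "dim_row (msum n m R K) = n" "dim_col (msum n m R K) = m"
  unfolding msum_def by simp_all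

lemma msum_carrier: "msum n m R K \<in> carrier_mat n m"
  unfolding msum_def by simp

lemma index_msum: "i < n \<Longrightarrow> j < m \<Longrightarrow> msum n m R K $$ (i, j) = (\<Sum>k\<in>K. R k $$ (i, j))"
  unfolding msum_def by simp

lemma frob_norm_msum_le:
  assumes "finite K" "\<And>k. k \<in> K \<Longrightarrow> R k \<in> carrier_mat n m"
  shows "frob_norm (msum n m R K) \<le> (\<Sum>k\<in>K. frob_norm (R k))"
  using assms
proof (induction K rule: finite_induct)
  case empty
  then show ?case by (simp add: frob_norm_def msum_def)
next
  case (insert a K)
  have "msum n m R (insert a K) = R a + msum n m R K"
    using insert by (intro eq_matI) (auto simp: index_msum msum_carrier)
  then have "frob_norm (msum n m R (insert a K)) \<le> frob_norm (R a) + frob_norm (msum n m R K)"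
    using insert frob_norm_add_le[OF _ msum_carrier, of "R a"] by simp
  then show ?case using insert by simp
qed

lemma frob_inner_le:
  assumes "Y \<in> carrier_mat n m" "Z \<in> carrier_mat n m"
  shows "(\<Sum>i<n. \<Sum>j<m. Y $$ (i, j) * Z $$ (i, j)) \<le> frob_norm Y * frob_norm Z"
proof -
  have "(\<Sum>i<n. \<Sum>j<m. Y $$ (i, j) * Z $$ (i, j)) \<le> (\<Sum>p\<in>{..<n} \<times> {..<m}. \<bar>Y $$ p\<bar> * \<bar>Z $$ p\<bar>)"
    by (auto simp: sum.cartesian_product abs_mult[symmetric] intro!: sum_mono)
  also have "\<dots> \<le> frob_norm Y * frob_norm Z"
    using assms by (simp add: frob_norm_L2_set L2_set_mult_ineq)
  finally show ?thesis .
qed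

lemma index_mult_mat_apply:
  "A \<in> carrier_mat n k \<Longrightarrow> B \<in> carrier_mat k m \<Longrightarrow> i < n \<Longrightarrow> j < m \<Longrightarrow>
     (A * B) $$ (i, j) = mat_apply A (\<lambda>l. B $$ (l, j)) i"
  by (simp add: mat_apply_def scalar_prod_def lessThan_atLeast0)

lemma frob_norm_mult_left_le:
  assumes E: "E \<in> carrier_mat n n" and Y: "Y \<in> carrier_mat n m" and \<beta>: "0 \<le> \<beta>"
    and bound: "\<And>z. sqnorm n (mat_apply E z) \<le> \<beta>\<^sup>2 * sqnorm n z"
  shows "frob_norm (E * Y) \<le> \<beta> * frob_norm Y"
proof -
  have "(\<Sum>i<n. \<Sum>j<m. ((E * Y) $$ (i, j))\<^sup>2) = (\<Sum>j<m. sqnorm n (mat_apply E (\<lambda>k. Y $$ (k, j))))"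
    using E Y unfolding sqnorm_def by (subst sum.swap) (auto simp del: index_mult_mat simp: index_mult_mat_apply intro!: sum.cong)
  also have "\<dots> \<le> (\<Sum>j<m. \<beta>\<^sup>2 * sqnorm n (\<lambda>k. Y $$ (k, j)))"
    by (intro sum_mono bound)
  also have "\<dots> = \<beta>\<^sup>2 * (\<Sum>i<n. \<Sum>j<m. (Y $$ (i, j))\<^sup>2)"
    unfolding sqnorm_def by (simp add: sum_distrib_left sum.swap[of _ "{..<m}"])
  finally have "sqrt (\<Sum>i<n. \<Sum>j<m. ((E * Y) $$ (i, j))\<^sup>2) \<le> \<beta> * sqrt (\<Sum>i<n. \<Sum>j<m. (Y $$ (i, j))\<^sup>2)"
    using \<beta> by (metis real_sqrt_le_mono real_sqrt_mult real_sqrt_abs abs_of_nonneg)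
  then show ?thesis using E Y by (simp add: frob_norm_def)
qed

lemma frob_norm_mult_right_le:
  assumes E: "E \<in> carrier_mat m m" "sym_mat E" and Y: "Y \<in> carrier_mat n m" and \<beta>: "0 \<le> \<beta>"
    and bound: "\<And>z. sqnorm m (mat_apply E z) \<le> \<beta>\<^sup>2 * sqnorm m z"
  shows "frob_norm (Y * E) \<le> \<beta> * frob_norm Y"
proof -
  have "frob_norm (Y * E) = frob_norm (transpose_mat E * transpose_mat Y)"
    using E Y by (metis frob_norm_transpose transpose_mult)
  also have "\<dots> = frob_norm (E * transpose_mat Y)"
    using E(2) unfolding sym_mat_def by (simp only: flip: E(2)[unfolded sym_mat_def])
  also have "\<dots> \<le> \<beta> * frob_norm (transpose_mat Y)"
    using E Y \<beta> bound by (intro frob_norm_mult_left_le) auto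
  finally show ?thesis by (simp add: frob_norm_transpose)
qed

lemma frob_inner_sylvester_eq:
  assumes A1: "A1 \<in> carrier_mat n n" and A2: "A2 \<in> carrier_mat m m" and Y: "Y \<in> carrier_mat n m"
  shows "(\<Sum>i<n. \<Sum>j<m. Y $$ (i, j) * (A1 * Y + Y * A2) $$ (i, j))
    = (\<Sum>j<m. bilin A1 (\<lambda>i. Y $$ (i, j)) (\<lambda>i. Y $$ (i, j)))
      + (\<Sum>i<n. bilin A2 (\<lambda>j. Y $$ (i, j)) (\<lambda>j. Y $$ (i, j)))"
proof -
  have cols: "(\<Sum>i<n. \<Sum>j<m. Y $$ (i, j) * (A1 * Y) $$ (i, j))
      = (\<Sum>j<m. bilin A1 (\<lambda>i. Y $$ (i, j)) (\<lambda>i. Y $$ (i, j)))"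
    using A1 Y unfolding bilin_eq_sum_mat_apply
    by (subst sum.swap) (auto simp del: index_mult_mat simp: index_mult_mat_apply intro!: sum.cong)
  have rows: "(\<Sum>j<m. Y $$ (i, j) * (Y * A2) $$ (i, j)) = bilin A2 (\<lambda>j. Y $$ (i, j)) (\<lambda>j. Y $$ (i, j))"
    if "i < n" for i
  proof -
    have "(\<Sum>j<m. Y $$ (i, j) * (Y * A2) $$ (i, j)) = (\<Sum>j<m. \<Sum>k<m. Y $$ (i, k) * A2 $$ (k, j) * Y $$ (i, j))"
      using A2 Y that
      by (auto simp: scalar_prod_def lessThan_atLeast0 sum_distrib_left mult_ac intro!: sum.cong)
    also have "\<dots> = bilin A2 (\<lambda>j. Y $$ (i, j)) (\<lambda>j. Y $$ (i, j))"
      using A2 unfolding bilin_def by (subst sum.swap) simp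
    finally show ?thesis .
  qed
  show ?thesis
    using A1 A2 Y unfolding cols[symmetric]
    by (simp add: rows[symmetric] sum.distrib[symmetric] algebra_simps)
qed

lemma frob_norm_sylvester_lower:
  assumes A1: "A1 \<in> carrier_mat n n" and A2: "A2 \<in> carrier_mat m m" and Y: "Y \<in> carrier_mat n m"
    and lower1: "\<And>x. \<alpha>1 * sqnorm n x \<le> bilin A1 x x"
    and lower2: "\<And>x. \<alpha>2 * sqnorm m x \<le> bilin A2 x x"
  shows "(\<alpha>1 + \<alpha>2) * frob_norm Y \<le> frob_norm (A1 * Y + Y * A2)"
proof -
  define Z where "Z = A1 * Y + Y * A2"
  have Z: "Z \<in> carrier_mat n m" using A1 A2 Y by (simp add: Z_def)
  have norm_sq: "(frob_norm Y)\<^sup>2 = (\<Sum>i<n. \<Sum>j<m. (Y $$ (i, j))\<^sup>2)"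
    using Y by (simp add: frob_norm_def sum_nonneg)
  have "(\<Sum>i<n. \<Sum>j<m. (Y $$ (i, j))\<^sup>2) = (\<Sum>j<m. sqnorm n (\<lambda>i. Y $$ (i, j)))"
    unfolding sqnorm_def by (rule sum.swap)
  moreover have "(\<Sum>i<n. \<Sum>j<m. (Y $$ (i, j))\<^sup>2) = (\<Sum>i<n. sqnorm m (\<lambda>j. Y $$ (i, j)))"
    unfolding sqnorm_def ..
  ultimately have "(\<alpha>1 + \<alpha>2) * (frob_norm Y)\<^sup>2
      = (\<Sum>j<m. \<alpha>1 * sqnorm n (\<lambda>i. Y $$ (i, j))) + (\<Sum>i<n. \<alpha>2 * sqnorm m (\<lambda>j. Y $$ (i, j)))"
    unfolding norm_sq by (simp add: distrib_right sum_distrib_left[symmetric])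
  also have "\<dots> \<le> (\<Sum>j<m. bilin A1 (\<lambda>i. Y $$ (i, j)) (\<lambda>i. Y $$ (i, j)))
      + (\<Sum>i<n. bilin A2 (\<lambda>j. Y $$ (i, j)) (\<lambda>j. Y $$ (i, j)))"
    by (intro add_mono sum_mono lower1 lower2)
  also have "\<dots> = (\<Sum>i<n. \<Sum>j<m. Y $$ (i, j) * Z $$ (i, j))"
    unfolding Z_def by (rule frob_inner_sylvester_eq[OF A1 A2 Y, symmetric])
  also have "\<dots> \<le> frob_norm Y * frob_norm Z"
    by (rule frob_inner_le[OF Y Z])
  finally have "frob_norm Y * ((\<alpha>1 + \<alpha>2) * frob_norm Y) \<le> frob_norm Y * frob_norm Z"
    by (simp add: power2_eq_square mult_ac)
  then show ?thesis
    using frob_norm_nonneg[of Y] frob_norm_nonneg[of Z] unfolding Z_def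
    by (cases "frob_norm Y = 0") (auto simp: mult_le_cancel_left)
qed

section \<open>Residuals of the hierarchical solver\<close>

lemma Xacc_carrier: "Xl \<in> carrier_mat n m \<Longrightarrow> Xacc l Xl dX h \<in> carrier_mat n m"
  unfolding Xacc_def by (simp add: msum_carrier)

lemma Xacc_top: "Xl \<in> carrier_mat n m \<Longrightarrow> Xacc l Xl dX l = Xl"
  unfolding Xacc_def by (intro eq_matI) (auto simp: index_msum)

lemma Xacc_Suc:
  assumes "Xl \<in> carrier_mat n m" "dX h \<in> carrier_mat n m" "h < l"
  shows "Xacc l Xl dX h = Xacc l Xl dX (Suc h) + dX h"
  using assms unfolding Xacc_def
  by (intro eq_matI) (auto simp: index_msum sum.atLeast_Suc_lessThan)

lemma sylvester_residual_telescope: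
  fixes M1 M2 :: "nat \<Rightarrow> real mat"
  assumes M1: "\<And>h. M1 h \<in> carrier_mat n1 n1" and M2: "\<And>h. M2 h \<in> carrier_mat n2 n2"
    and B: "B \<in> carrier_mat n1 n2" and Xl: "Xl \<in> carrier_mat n1 n2"
    and dX: "\<And>h. h < l \<Longrightarrow> dX h \<in> carrier_mat n1 n2"
    and Rl: "R l = M1 l * Xl + Xl * M2 l - B"
    and Xi: "\<And>h. h < l \<Longrightarrow> Xi h =
        - ((M1 h - M1 (Suc h)) * Xacc l Xl dX (Suc h)) - Xacc l Xl dX (Suc h) * (M2 h - M2 (Suc h))"
    and Rh: "\<And>h. h < l \<Longrightarrow> R h = M1 h * dX h + dX h * M2 h - Xi h"
  shows "h \<le> l \<Longrightarrow> M1 h * Xacc l Xl dX h + Xacc l Xl dX h * M2 h = B + msum n1 n2 R {h..l}"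
proof (induction h rule: inc_induct)
  case base
  show ?case
    using M1[of l] M2[of l] B Xl by (intro eq_matI) (auto simp: Xacc_top index_msum Rl)
next
  case (step h)
  define Y where "Y = Xacc l Xl dX (Suc h)"
  have Y: "Y \<in> carrier_mat n1 n2" unfolding Y_def by (rule Xacc_carrier[OF Xl])
  have D: "dX h \<in> carrier_mat n1 n2" using dX step(2) by simp
  have Xi_carrier: "Xi h \<in> carrier_mat n1 n2"
    unfolding Xi[OF step(2)] Y_def[symmetric] by (intro minus_carrier_mat mult_carrier_mat[OF Y] M2)
  have Xacc_h: "Xacc l Xl dX h = Y + dX h" unfolding Y_def by (rule Xacc_Suc[where dX = dX, OF Xl D step(2)])
  show ?case
  proof (rule eq_matI)
    fix i j assume "i < dim_row (B + msum n1 n2 R {h..l})" "j < dim_col (B + msum n1 n2 R {h..l})"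
    then have ij: "i < n1" "j < n2" using B by auto
    have IH: "(M1 (Suc h) * Y) $$ (i, j) + (Y * M2 (Suc h)) $$ (i, j)
        = B $$ (i, j) + (\<Sum>k\<in>{Suc h..l}. R k $$ (i, j))"
      using arg_cong[OF step.IH, of "\<lambda>M. M $$ (i, j)"] ij M1[of "Suc h"] M2[of "Suc h"] Y B
      by (simp add: Y_def[symmetric] index_msum)
    have Xi_ij: "Xi h $$ (i, j) = (M1 (Suc h) * Y) $$ (i, j) - (M1 h * Y) $$ (i, j)
        + (Y * M2 (Suc h)) $$ (i, j) - (Y * M2 h) $$ (i, j)"
      using ij M1[of h] M1[of "Suc h"] M2[of h] M2[of "Suc h"] Y
      by (simp add: Xi[OF step(2)] Y_def[symmetric] minus_mult_distrib_mat[OF M1 M1 Y]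
          mult_minus_distrib_mat[OF Y M2 M2])
    have R_ij: "R h $$ (i, j) = (M1 h * dX h) $$ (i, j) + (dX h * M2 h) $$ (i, j) - Xi h $$ (i, j)"
      using ij M1[of h] M2[of h] D Xi_carrier by (simp add: Rh[OF step(2)])
    have "(\<Sum>k\<in>{h..l}. R k $$ (i, j)) = R h $$ (i, j) + (\<Sum>k\<in>{Suc h..l}. R k $$ (i, j))"
      using step(2) by (simp add: sum.atLeast_Suc_atMost)
    then show "(M1 h * Xacc l Xl dX h + Xacc l Xl dX h * M2 h) $$ (i, j)
        = (B + msum n1 n2 R {h..l}) $$ (i, j)"
      using ij M1[of h] M2[of h] Y D B IH Xi_ij R_ij
      by (simp add: Xacc_h mult_add_distrib_mat[OF M1 Y D] add_mult_distrib_mat[OF Y D M2] index_msum)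
  qed (use M1[of h] M2[of h] B Y D in \<open>simp_all add: Xacc_h\<close>)
qed

lemma frob_norm_level_difference_le:
  assumes P1: "nested_partitions n1 l P1" and P2: "nested_partitions n2 l P2" and h: "h < l"
    and A1: "A1 \<in> carrier_mat n1 n1" "sym_mat A1" "spectrum_in A1 \<alpha>1 \<beta>1" "0 < \<alpha>1" "\<alpha>1 \<le> \<beta>1"
    and A2: "A2 \<in> carrier_mat n2 n2" "sym_mat A2" "spectrum_in A2 \<alpha>2 \<beta>2" "0 < \<alpha>2" "\<alpha>2 \<le> \<beta>2"
    and Y: "Y \<in> carrier_mat n1 n2"
  shows "frob_norm (- ((block_part (P1 h) A1 - block_part (P1 (Suc h)) A1) * Y)
      - Y * (block_part (P2 h) A2 - block_part (P2 (Suc h)) A2))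
    \<le> (\<beta>1 + \<beta>2) / (\<alpha>1 + \<alpha>2)
      * frob_norm (block_part (P1 (Suc h)) A1 * Y + Y * block_part (P2 (Suc h)) A2)"
proof -
  define E1 where "E1 = block_part (P1 h) A1 - block_part (P1 (Suc h)) A1"
  define E2 where "E2 = block_part (P2 h) A2 - block_part (P2 (Suc h)) A2"
  have bounds1: "\<alpha>1 * sqnorm n1 x \<le> bilin A1 x x \<and> bilin A1 x x \<le> \<beta>1 * sqnorm n1 x" for x
    by (rule quadform_bounds_of_spectrum[OF A1(1-3)])
  have bounds2: "\<alpha>2 * sqnorm n2 x \<le> bilin A2 x x \<and> bilin A2 x x \<le> \<beta>2 * sqnorm n2 x" for x
    by (rule quadform_bounds_of_spectrum[OF A2(1-3)])
  have E1: "E1 \<in> carrier_mat n1 n1" unfolding E1_def by (rule minus_carrier_mat[OF block_part_carrier[OF A1(1)]])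
  have E2: "E2 \<in> carrier_mat n2 n2" "sym_mat E2"
    unfolding E2_def using A2(1,2)
    by (auto intro!: minus_carrier_mat sym_mat_minus block_part_carrier sym_mat_block_part)
  have "frob_norm (- (E1 * Y) - Y * E2) \<le> frob_norm (E1 * Y) + frob_norm (Y * E2)"
    using E1 E2 Y frob_norm_add_le[of "- (E1 * Y)" n1 n2 "- (Y * E2)"]
    by (simp add: minus_add_uminus_mat[of _ n1 n2] frob_norm_uminus)
  also have "\<dots> \<le> \<beta>1 * frob_norm Y + \<beta>2 * frob_norm Y"
  proof (rule add_mono)
    show "frob_norm (E1 * Y) \<le> \<beta>1 * frob_norm Y"
      using E1 Y A1(4,5) sqnorm_level_difference_le[OF P1 h A1(1,2) bounds1 A1(4,5)]
      unfolding E1_def by (intro frob_norm_mult_left_le) auto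
    show "frob_norm (Y * E2) \<le> \<beta>2 * frob_norm Y"
      using E2 Y A2(4,5) sqnorm_level_difference_le[OF P2 h A2(1,2) bounds2 A2(4,5)]
      unfolding E2_def by (intro frob_norm_mult_right_le) auto
  qed
  also have "\<dots> = (\<beta>1 + \<beta>2) / (\<alpha>1 + \<alpha>2) * ((\<alpha>1 + \<alpha>2) * frob_norm Y)"
    using A1(4) A2(4) by (simp add: field_simps)
  also have "\<dots> \<le> (\<beta>1 + \<beta>2) / (\<alpha>1 + \<alpha>2)
      * frob_norm (block_part (P1 (Suc h)) A1 * Y + Y * block_part (P2 (Suc h)) A2)"
    using A1(4,5) A2(4,5) h
      quadform_bounds_block_part[OF P1 A1(1) bounds1] quadform_bounds_block_part[OF P2 A2(1) bounds2]
    by (intro mult_left_mono frob_norm_sylvester_lower[OF block_part_carrier[OF A1(1)]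
          block_part_carrier[OF A2(1)] Y]) auto
  finally show ?thesis unfolding E1_def E2_def .
qed

lemma accumulated_residual_bound:
  fixes r :: "nat \<Rightarrow> real"
  assumes c: "0 \<le> c" and b: "0 \<le> b"
    and top: "r l \<le> \<epsilon> * b"
    and step: "\<And>h. h < l \<Longrightarrow> r h \<le> c * (b + (\<Sum>k\<in>{Suc h..l}. r k))"
  shows "h \<le> l \<Longrightarrow> b + (\<Sum>k\<in>{h..l}. r k) \<le> (1 + \<epsilon>) * (1 + c) ^ (l - h) * b"
proof (induction h rule: inc_induct)
  case base
  then show ?case using top by (simp add: algebra_simps)
next
  case (step h)
  have "b + (\<Sum>k\<in>{h..l}. r k) = r h + (b + (\<Sum>k\<in>{Suc h..l}. r k))"
    using step.hyps(2) by (simp add: sum.atLeast_Suc_atMost)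
  also have "\<dots> \<le> (1 + c) * (b + (\<Sum>k\<in>{Suc h..l}. r k))"
    using assms(4)[OF step.hyps(2)] by (simp add: algebra_simps)
  also have "\<dots> \<le> (1 + c) * ((1 + \<epsilon>) * (1 + c) ^ (l - Suc h) * b)"
    using step.IH c by (intro mult_left_mono) auto
  also have "\<dots> = (1 + \<epsilon>) * (1 + c) ^ (l - h) * b"
    using step.hyps(2) by (simp add: Suc_diff_Suc[symmetric])
  finally show ?case .
qed

lemma residual_bound:
  fixes r :: "nat \<Rightarrow> real"
  assumes \<epsilon>: "0 \<le> \<epsilon>" "\<epsilon> \<le> c" and b: "0 \<le> b"
    and top: "r l \<le> \<epsilon> * b"
    and step: "\<And>h. h < l \<Longrightarrow> r h \<le> c * (b + (\<Sum>k\<in>{Suc h..l}. r k))"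
    and h: "h \<le> l"
  shows "r h \<le> c * (1 + \<epsilon>) * (1 + c) powi (int l - int h - 1) * b"
proof (cases "h = l")
  case True
  have "\<epsilon> * (1 + c) \<le> c * (1 + \<epsilon>)" using \<epsilon> by (simp add: algebra_simps mult_right_mono)
  then have "\<epsilon> * b \<le> c * (1 + \<epsilon>) / (1 + c) * b"
    using \<epsilon> b by (intro mult_right_mono) (simp_all add: field_simps)
  with top True show ?thesis by (simp add: power_int_minus field_simps)
next
  case False
  with h have "h < l" by simp
  have "int l - int h - 1 = int (l - Suc h)" using \<open>h < l\<close> by simp
  then have "c * (1 + \<epsilon>) * (1 + c) powi (int l - int h - 1) * b
      = c * ((1 + \<epsilon>) * (1 + c) ^ (l - Suc h) * b)"
    by (simp only: power_int_of_nat mult_ac)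
  moreover have "r h \<le> c * (b + (\<Sum>k\<in>{Suc h..l}. r k))" by (rule step[OF \<open>h < l\<close>])
  moreover have "b + (\<Sum>k\<in>{Suc h..l}. r k) \<le> (1 + \<epsilon>) * (1 + c) ^ (l - Suc h) * b"
    using accumulated_residual_bound[OF _ b top step] \<epsilon> \<open>h < l\<close> by simp
  ultimately show ?thesis using \<epsilon> by (metis mult_left_mono order_trans)
qed

theorem lemma3p1:
  fixes n1 n2 l :: nat
    and A1 A2 B Xl :: "real mat"
    and dX :: "nat \<Rightarrow> real mat"
    and P1 P2 :: "nat \<Rightarrow> nat set set"
    and \<alpha>1 \<beta>1 \<alpha>2 \<beta>2 \<epsilon> \<kappa> :: real
    and Xi R :: "nat \<Rightarrow> real mat"
  assumes A1: "A1 \<in> carrier_mat n1 n1" and A2: "A2 \<in> carrier_mat n2 n2"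
    and B: "B \<in> carrier_mat n1 n2"
    and pd1: "pos_def_mat A1" and pd2: "pos_def_mat A2"
    and sp1: "spectrum_in A1 \<alpha>1 \<beta>1" and sp2: "spectrum_in A2 \<alpha>2 \<beta>2"
    and a1: "0 < \<alpha>1" "\<alpha>1 \<le> \<beta>1" and a2: "0 < \<alpha>2" "\<alpha>2 \<le> \<beta>2"
    and eps: "\<epsilon> > 0"
    and kappa: "\<kappa> = (\<beta>1 + \<beta>2) / (\<alpha>1 + \<alpha>2)"
    and keps: "\<kappa> * \<epsilon> < 1"
    and P1: "nested_partitions n1 l P1" and P2: "nested_partitions n2 l P2"
    and Xl: "Xl \<in> carrier_mat n1 n2"
    and dX: "\<And>h. h < l \<Longrightarrow> dX h \<in> carrier_mat n1 n2"
    and Rl: "R l = block_part (P1 l) A1 * Xl + Xl * block_part (P2 l) A2 - B"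
    and Xi_def: "\<And>h. h < l \<Longrightarrow> Xi h =
        - ((block_part (P1 h) A1 - block_part (P1 (Suc h)) A1) * Xacc l Xl dX (Suc h))
        - Xacc l Xl dX (Suc h) * (block_part (P2 h) A2 - block_part (P2 (Suc h)) A2)"
    and Rh: "\<And>h. h < l \<Longrightarrow> R h =
        block_part (P1 h) A1 * dX h + dX h * block_part (P2 h) A2 - Xi h"
    and resl: "frob_norm (R l) \<le> \<epsilon> * frob_norm B"
    and resh: "\<And>h. h < l \<Longrightarrow> frob_norm (R h) \<le> \<epsilon> * frob_norm (Xi h)"
  shows "\<forall>h\<le>l.
     block_part (P1 h) A1 * Xacc l Xl dX h + Xacc l Xl dX h * block_part (P2 h) A2
       = B + msum n1 n2 R {h..l}
     \<and> frob_norm (R h) \<le> \<kappa> * \<epsilon> * (1 + \<epsilon>) * (1 + \<kappa> * \<epsilon>) powi (int l - int h - 1) * frob_norm B"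
proof -
  have sym: "sym_mat A1" "sym_mat A2" using pd1 pd2 by (simp_all add: pos_def_mat_def)
  note telescope = sylvester_residual_telescope[OF block_part_carrier[OF A1] block_part_carrier[OF A2]
      B Xl dX Rl Xi_def Rh]
  have R: "R k \<in> carrier_mat n1 n2" if "k \<le> l" for k
  proof (cases "k = l")
    case False
    with that have "k < l" by simp
    show ?thesis
      unfolding Rh[OF \<open>k < l\<close>] Xi_def[OF \<open>k < l\<close>]
      by (intro minus_carrier_mat mult_carrier_mat[OF Xacc_carrier[OF Xl]] block_part_carrier[OF A2])
  qed (simp add: Rl minus_carrier_mat[OF B])
  have "1 \<le> \<kappa>" using a1 a2 by (simp add: kappa)
  have step: "frob_norm (R h) \<le> \<kappa> * \<epsilon> * (frob_norm B + (\<Sum>k\<in>{Suc h..l}. frob_norm (R k)))"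
    if "h < l" for h
  proof -
    have "frob_norm (Xi h) \<le> \<kappa> * frob_norm (block_part (P1 (Suc h)) A1 * Xacc l Xl dX (Suc h)
        + Xacc l Xl dX (Suc h) * block_part (P2 (Suc h)) A2)"
      unfolding Xi_def[OF that] kappa
      by (rule frob_norm_level_difference_le[OF P1 P2 that A1 sym(1) sp1 a1 A2 sym(2) sp2 a2 Xacc_carrier[OF Xl]])
    also have "\<dots> = \<kappa> * frob_norm (B + msum n1 n2 R {Suc h..l})"
      using telescope[of "Suc h"] that by simp
    also have "\<dots> \<le> \<kappa> * (frob_norm B + (\<Sum>k\<in>{Suc h..l}. frob_norm (R k)))"
    proof (rule mult_left_mono)
      have "frob_norm (msum n1 n2 R {Suc h..l}) \<le> (\<Sum>k\<in>{Suc h..l}. frob_norm (R k))"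
        using R by (intro frob_norm_msum_le) auto
      then show "frob_norm (B + msum n1 n2 R {Suc h..l}) \<le> frob_norm B + (\<Sum>k\<in>{Suc h..l}. frob_norm (R k))"
        using frob_norm_add_le[OF B msum_carrier, of R "{Suc h..l}"] by linarith
    qed (use \<open>1 \<le> \<kappa>\<close> in simp)
    finally have "\<epsilon> * frob_norm (Xi h) \<le> \<epsilon> * (\<kappa> * (frob_norm B + (\<Sum>k\<in>{Suc h..l}. frob_norm (R k))))"
      by (rule mult_left_mono) (use eps in simp)
    then show ?thesis using order_trans[OF resh[OF that]] by (simp add: mult_ac)
  qed
  have "\<epsilon> \<le> \<kappa> * \<epsilon>" using \<open>1 \<le> \<kappa>\<close> eps by simp
  with eps step show ?thesis
    using telescope residual_bound[where r = "\<lambda>k. frob_norm (R k)", OF _ _ frob_norm_nonneg resl]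
    by simp
qed

end
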